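(* Let $\Gamma$ be a mandarin graph with $N$ edges and let $\mathbf{z}\in\Sigma(\Gamma)$. Define $\mathcal{T}_{\mathbf{z},\mathrm{s}}(\Gamma)=\{\mathbf{x}\in\mathcal{T}_{\mathbf{z}}(\Gamma):(A_j,B_j)=(C_j,D_j)\text{ for all }j\}$ and $\mathcal{T}_{\mathbf{z},\mathrm{as}}(\Gamma)=\{\mathbf{x}\in\mathcal{T}_{\mathbf{z}}(\Gamma):(A_j,B_j)=-(C_j,D_j)\text{ for all }j\}$. Then $\mathcal{T}_{\mathbf{z}}(\Gamma)=\mathcal{T}_{\mathbf{z},\mathrm{s}}(\Gamma)\oplus\mathcal{T}_{\mathbf{z},\mathrm{as}}(\Gamma)$, and $\mathcal{T}_{\mathbf{z},\mathrm{s}}(\Gamma)\ne\{0\}\iff P_{M,\mathrm{s}}(\mathbf{z})=0$, $\mathcal{T}_{\mathbf{z},\mathrm{as}}(\Gamma)\ne\{0\}\iff P_{M,\mathrm{as}}(\mathbf{z})=0$, where $P_{M,\mathrm{s}}(\mathbf{z})=\sum_{j=1}^N(z_j-1)\prod_{i\ne j}(z_i+1)$ and $P_{M,\mathrm{as}}(\mathbf{z})=\sum_{j=1}^N(z_j+1)\prod_{i\ne j}(z_i-1)$.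
   Context: A mandarin graph has exactly two vertices and $N$ edges $e_1,\dots,e_N$ each joining them; each edge is oriented. For $\boldsymbol{\ell}\in\mathbb{R}_+^N$, $(\Gamma,\boldsymbol{\ell})$ has $e_j\cong[0,\ell_j]$ and the Laplacian $-d^2/dt^2$ edgewise with standard vertex conditions (continuity, zero sum of outgoing derivatives at each vertex). For an eigenpair $(k^2,f)$, $k>0$: $f|_{e_j}(t)=A_j\cos(kt)+B_j\sin(kt)=C_j\cos(k(\ell_j-t))+D_j\sin(k(\ell_j-t))$, and $\mathrm{tr}_k(f)\in\mathbb{C}^{4N}$ is the vector of all $(A_j,B_j,C_j,D_j)$; for $k=0$ (constant $c$), $A_j=C_j=c$, $B_j=D_j=0$. Trace space $\mathcal{T}(\Gamma)=\{(\exp(ik\boldsymbol{\ell}),\mathrm{tr}_k(f))\}$ over all $\boldsymbol{\ell}$, eigenvalues $k^2$, and $f$ in the eigenspace (including $0$), where $\exp(ik\boldsymbol{\ell})=(e^{ik\ell_j})_j\in\mathbb{T}^N$; $\Sigma(\Gamma)$ is the projection to $\mathbb{T}^N$ and $\mathcal{T}_{\mathbf{z}}(\Gamma)=\{\mathbf{x}:(\mathbf{z},\mathbf{x})\in\mathcal{T}(\Gamma)\}$. *)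

theory Defs
  imports "HOL-Analysis.Analysis"
begin

text \<open>Mandarin graph with edge set indexed by a finite type 'n (so N = CARD('n)).
  Two vertices u, v; every edge e_j is oriented from u (t = 0) to v (t = l_j).
  A function on the metric graph is a family f j of complex functions, f j living
  on [0, l_j].\<close>

definition eig_fun :: "real^'n \<Rightarrow> real \<Rightarrow> ('n::finite \<Rightarrow> real \<Rightarrow> complex) \<Rightarrow> bool" where
  "eig_fun l lam f \<longleftrightarrow>
     (\<exists>f' f''. (\<forall>j. \<forall>t\<in>{0..l$j}.
         (f j has_vector_derivative f' j t) (at t within {0..l$j}) \<and>
         (f' j has_vector_derivative f'' j t) (at t within {0..l$j}) \<and>
         - f'' j t = of_real lam * f j t)
      \<and> (\<forall>i j. f i 0 = f j 0)
      \<and> (\<forall>i j. f i (l$i) = f j (l$j))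
      \<and> (\<Sum>j\<in>UNIV. f' j 0) = 0
      \<and> (\<Sum>j\<in>UNIV. - f' j (l$j)) = 0)"

definition is_eigenvalue :: "real^'n::finite \<Rightarrow> real \<Rightarrow> bool" where
  "is_eigenvalue l lam \<longleftrightarrow>
     (\<exists>f. eig_fun l lam f \<and> (\<exists>j. \<exists>t\<in>{0..l$j}. f j t \<noteq> 0))"

definition trA :: "complex^('n::finite \<times> 4) \<Rightarrow> 'n \<Rightarrow> complex" where "trA x j = x $ (j, 0)"
definition trB :: "complex^('n::finite \<times> 4) \<Rightarrow> 'n \<Rightarrow> complex" where "trB x j = x $ (j, 1)"
definition trC :: "complex^('n::finite \<times> 4) \<Rightarrow> 'n \<Rightarrow> complex" where "trC x j = x $ (j, 2)"
definition trD :: "complex^('n::finite \<times> 4) \<Rightarrow> 'n \<Rightarrow> complex" where "trD x j = x $ (j, 3)"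

definition is_trace :: "real^'n::finite \<Rightarrow> real \<Rightarrow> ('n \<Rightarrow> real \<Rightarrow> complex) \<Rightarrow> complex^('n \<times> 4) \<Rightarrow> bool" where
  "is_trace l k f x \<longleftrightarrow>
     (k > 0 \<longrightarrow> (\<forall>j. \<forall>t\<in>{0..l$j}.
        f j t = trA x j * of_real (cos (k * t)) + trB x j * of_real (sin (k * t)) \<and>
        f j t = trC x j * of_real (cos (k * (l$j - t))) + trD x j * of_real (sin (k * (l$j - t)))))
   \<and> (k = 0 \<longrightarrow> (\<exists>c. (\<forall>j. \<forall>t\<in>{0..l$j}. f j t = c) \<and>
        (\<forall>j. trA x j = c \<and> trB x j = 0 \<and> trC x j = c \<and> trD x j = 0)))"

definition trace_space :: "((complex^'n::finite) \<times> (complex^('n \<times> 4))) set" where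
  "trace_space = {(z, x). \<exists>l k f. (\<forall>j. l$j > 0) \<and> k \<ge> 0 \<and>
       is_eigenvalue l (k\<^sup>2) \<and> eig_fun l (k\<^sup>2) f \<and>
       z = (\<chi> j. exp (\<i> * of_real (k * l$j))) \<and> is_trace l k f x}"

definition Sigma_set :: "(complex^'n::finite) set" where
  "Sigma_set = fst ` (trace_space :: ((complex^'n) \<times> (complex^('n \<times> 4))) set)"

definition trace_fiber :: "complex^'n::finite \<Rightarrow> (complex^('n \<times> 4)) set" where
  "trace_fiber z = {x. (z, x) \<in> trace_space}"

definition trace_fiber_s :: "complex^'n::finite \<Rightarrow> (complex^('n \<times> 4)) set" where
  "trace_fiber_s z = {x \<in> trace_fiber z. \<forall>j. trA x j = trC x j \<and> trB x j = trD x j}"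

definition trace_fiber_as :: "complex^'n::finite \<Rightarrow> (complex^('n \<times> 4)) set" where
  "trace_fiber_as z = {x \<in> trace_fiber z. \<forall>j. trA x j = - trC x j \<and> trB x j = - trD x j}"

definition P_s :: "complex^'n::finite \<Rightarrow> complex" where
  "P_s z = (\<Sum>j\<in>UNIV. (z$j - 1) * (\<Prod>i\<in>UNIV - {j}. z$i + 1))"

definition P_as :: "complex^'n::finite \<Rightarrow> complex" where
  "P_as z = (\<Sum>j\<in>UNIV. (z$j + 1) * (\<Prod>i\<in>UNIV - {j}. z$i - 1))"

end

(*
  For k > 0 an eigenfunction is A_j cos (k t) + B_j sin (k t) on e_j, and re-expanding it around
  the far end of e_j gives (C_j, D_j) = reflect z_j (A_j, B_j), a reflection of C^2 that depends
  only on z_j = exp (i k l_j). The vertex conditions say that A and C are constant and that B and D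
  sum to zero, so the fibre T_z is an explicit linear space depending on z alone. Reflections are
  involutions, hence reversing all edges, (A, B, C, D) -> (C, D, A, B), is a linear involution of
  T_z; its eigenspaces for 1 and -1 are the symmetric and the antisymmetric traces, which gives the
  direct sum. On the eigenspace for e = 1 or e = -1 the reflection condition reads
  (z_j - e) a = (z_j + e) b_j, where a is the common value of A and b = i B sums to zero, and
  eliminating a and b leaves sum_j (z_j - e) prod_{i ~= j} (z_i + e) = 0, i.e. P_s z = 0 or
  P_as z = 0.
*)

theory Submission
  imports Defs
begin

section \<open>Trace vectors and the edge reflection\<close>

definition trace_vec ::
    "('n::finite \<Rightarrow> complex) \<Rightarrow> ('n \<Rightarrow> complex) \<Rightarrow> ('n \<Rightarrow> complex) \<Rightarrow> ('n \<Rightarrow> complex)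
      \<Rightarrow> complex^('n \<times> 4)" where
  "trace_vec A B C D = (\<chi> p. case p of (j, r) \<Rightarrow>
     if r = 0 then A j else if r = 1 then B j else if r = 2 then C j else D j)"

lemma trace_vec_components [simp]:
  "trA (trace_vec A B C D) = A" "trB (trace_vec A B C D) = B"
  "trC (trace_vec A B C D) = C" "trD (trace_vec A B C D) = D"
  by (simp_all add: fun_eq_iff trace_vec_def trA_def trB_def trC_def trD_def)

lemma trace_components_add [simp]:
  "trA (x + y) j = trA x j + trA y j" "trB (x + y) j = trB x j + trB y j"
  "trC (x + y) j = trC x j + trC y j" "trD (x + y) j = trD x j + trD y j"
  by (simp_all add: trA_def trB_def trC_def trD_def)

lemma trace_components_scale [simp]:
  "trA (c *s x) j = c * trA x j" "trB (c *s x) j = c * trB x j"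
  "trC (c *s x) j = c * trC x j" "trD (c *s x) j = c * trD x j"
  by (simp_all add: trA_def trB_def trC_def trD_def)

lemma trace_components_uminus [simp]:
  "trA (- x) j = - trA x j" "trB (- x) j = - trB x j"
  "trC (- x) j = - trC x j" "trD (- x) j = - trD x j"
  by (simp_all add: trA_def trB_def trC_def trD_def)

lemma trace_components_zero [simp]:
  "trA 0 j = 0" "trB 0 j = 0" "trC 0 j = 0" "trD 0 j = 0"
  by (simp_all add: trA_def trB_def trC_def trD_def)

lemma trace_eq_iff:
  "x = y \<longleftrightarrow> trA x = trA y \<and> trB x = trB y \<and> trC x = trC y \<and> trD x = trD y"
proof (intro iffI; (elim conjE)?)
  assume "trA x = trA y" "trB x = trB y" "trC x = trC y" "trD x = trD y"
  then have components: "x $ (j, r) = y $ (j, r)" if "r = 0 \<or> r = 1 \<or> r = 2 \<or> r = 3" for j r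
    using that by (auto simp: fun_eq_iff trA_def trB_def trC_def trD_def)
  have "r = 0 \<or> r = 1 \<or> r = 2 \<or> r = 3" for r :: 4
    using exhaust_4[of r] by auto
  with components show "x = y"
    by (simp add: vec_eq_iff split_paired_all)
qed simp

lemma trace_vec_eq_0_iff:
  "trace_vec A B C D = 0 \<longleftrightarrow> (\<forall>j. A j = 0 \<and> B j = 0 \<and> C j = 0 \<and> D j = 0)"
  by (auto simp: trace_eq_iff fun_eq_iff)

text \<open>With \<open>z = exp (\<i> k l)\<close>, \<open>reflect z\<close> maps the coefficients \<open>(A, B)\<close> of a solution
  \<open>A cos (k t) + B sin (k t)\<close> to its coefficients \<open>(C, D)\<close> with respect to \<open>cos (k (l - t))\<close> and
  \<open>sin (k (l - t))\<close> (lemma \<open>reflect_cos_sin\<close>).\<close>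

definition reflect :: "complex \<Rightarrow> complex \<times> complex \<Rightarrow> complex \<times> complex" where
  "reflect z p = (of_real (Re z) * fst p + of_real (Im z) * snd p,
                  of_real (Im z) * fst p - of_real (Re z) * snd p)"

lemma reflect_exp [simp]:
  "reflect (exp (\<i> * of_real \<theta>)) (a, b) =
    (of_real (cos \<theta>) * a + of_real (sin \<theta>) * b, of_real (sin \<theta>) * a - of_real (cos \<theta>) * b)"
  by (simp add: reflect_def Re_exp Im_exp)

lemma reflect_light_cone:
  "fst (reflect z (a, b)) + \<i> * snd (reflect z (a, b)) = z * (a - \<i> * b)"
  "fst (reflect z (a, b)) - \<i> * snd (reflect z (a, b)) = cnj z * (a + \<i> * b)"
proof -
  define c s where "c = Re z" and "s = Im z"
  have z: "z = of_real c + \<i> * of_real s"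
    by (simp add: c_def s_def complex_eq_iff)
  show "fst (reflect z (a, b)) + \<i> * snd (reflect z (a, b)) = z * (a - \<i> * b)"
    "fst (reflect z (a, b)) - \<i> * snd (reflect z (a, b)) = cnj z * (a + \<i> * b)"
    unfolding reflect_def c_def[symmetric] s_def[symmetric] unfolding z
    by (simp_all add: algebra_simps)
qed

lemma complex_pair_eq_iff_light_cone:
  fixes p q x y :: complex
  shows "(p, q) = (x, y) \<longleftrightarrow> p + \<i> * q = x + \<i> * y \<and> p - \<i> * q = x - \<i> * y"
proof (intro iffI conjI; clarsimp?)
  assume "p + \<i> * q = x + \<i> * y" "p - \<i> * q = x - \<i> * y"
  moreover have "p = ((p + \<i> * q) + (p - \<i> * q)) / 2" "q = ((p + \<i> * q) - (p - \<i> * q)) / (2 * \<i>)"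
    "x = ((x + \<i> * y) + (x - \<i> * y)) / 2" "y = ((x + \<i> * y) - (x - \<i> * y)) / (2 * \<i>)"
    by (simp_all add: field_simps)
  ultimately show "p = x \<and> q = y" by metis
qed

lemma reflect_reflect:
  assumes "cmod z = 1"
  shows "reflect z (reflect z p) = p"
proof -
  have "reflect z (reflect z p) =
      (of_real ((Re z)\<^sup>2 + (Im z)\<^sup>2) * fst p, of_real ((Re z)\<^sup>2 + (Im z)\<^sup>2) * snd p)"
    by (simp add: reflect_def algebra_simps power2_eq_square)
  moreover have "(Re z)\<^sup>2 + (Im z)\<^sup>2 = 1"
    using assms by (simp add: cmod_def)
  ultimately show ?thesis by simp
qed

lemma reflect_eq_scale_iff:
  assumes z: "cmod z = 1" and \<epsilon>: "\<epsilon>\<^sup>2 = 1"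
  shows "reflect z (a, b) = (\<epsilon> * a, \<epsilon> * b) \<longleftrightarrow> (z - \<epsilon>) * a = \<i> * (z + \<epsilon>) * b"
proof -
  have "reflect z (a, b) = (\<epsilon> * a, \<epsilon> * b) \<longleftrightarrow>
      z * (a - \<i> * b) = \<epsilon> * (a + \<i> * b) \<and> cnj z * (a + \<i> * b) = \<epsilon> * (a - \<i> * b)"
    using complex_pair_eq_iff_light_cone[of "fst (reflect z (a, b))" "snd (reflect z (a, b))"]
    by (simp add: reflect_light_cone algebra_simps)
  also have "\<dots> \<longleftrightarrow> z * (a - \<i> * b) = \<epsilon> * (a + \<i> * b)"
  proof (intro iffI conjI; clarify?)
    assume h: "z * (a - \<i> * b) = \<epsilon> * (a + \<i> * b)"
    have "cnj z * z = 1" using z by (simp add: complex_norm_square[symmetric] mult.commute)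
    have "cnj z * (a + \<i> * b) = cnj z * (\<epsilon>\<^sup>2 * (a + \<i> * b))" using \<epsilon> by simp
    also have "\<dots> = \<epsilon> * (cnj z * z) * (a - \<i> * b)" by (simp add: h power2_eq_square)
    finally show "cnj z * (a + \<i> * b) = \<epsilon> * (a - \<i> * b)" using \<open>cnj z * z = 1\<close> by simp
  qed
  also have "\<dots> \<longleftrightarrow> (z - \<epsilon>) * a = \<i> * (z + \<epsilon>) * b"
  proof -
    have "z * (a - \<i> * b) - \<epsilon> * (a + \<i> * b) = (z - \<epsilon>) * a - \<i> * (z + \<epsilon>) * b"
      by (simp add: algebra_simps)
    then show ?thesis by (metis eq_iff_diff_eq_0)
  qed
  finally show ?thesis .
qed

lemma reflect_cos_sin:
  assumes "reflect (exp (\<i> * of_real \<theta>)) (A, B) = (C, D)"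
  shows "C * of_real (cos (\<theta> - s)) + D * of_real (sin (\<theta> - s)) =
    A * of_real (cos s) + B * of_real (sin s)"
proof -
  have C: "C = of_real (cos \<theta>) * A + of_real (sin \<theta>) * B"
    and D: "D = of_real (sin \<theta>) * A - of_real (cos \<theta>) * B"
    using assms by simp_all
  have "C * of_real (cos (\<theta> - s)) + D * of_real (sin (\<theta> - s)) =
      (of_real (cos \<theta>) * of_real (cos \<theta>) + of_real (sin \<theta>) * of_real (sin \<theta>))
        * (A * of_real (cos s) + B * of_real (sin s))"
    unfolding C D by (simp add: cos_diff sin_diff algebra_simps)
  moreover have
    "of_real (cos \<theta>) * of_real (cos \<theta>) + of_real (sin \<theta>) * of_real (sin \<theta>) = (1::complex)"
    by (metis of_real_1 of_real_add of_real_mult power2_eq_square sin_cos_squared_add2)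
  ultimately show ?thesis by simp
qed

section \<open>The trace fibre\<close>

text \<open>The trace conditions for \<open>k > 0\<close>: continuity at the two vertices makes \<open>A\<close> and \<open>C\<close>
  constant, and since \<open>f' 0 = k B\<^sub>j\<close> and \<open>f' l\<^sub>j = - k D\<^sub>j\<close> the Kirchhoff conditions become
  \<open>\<Sum> B = \<Sum> D = 0\<close>.\<close>

definition admissible_traces :: "complex^'n::finite \<Rightarrow> (complex^('n \<times> 4)) set" where
  "admissible_traces z = {x. (\<forall>i j. trA x i = trA x j) \<and> (\<forall>i j. trC x i = trC x j)
     \<and> sum (trB x) UNIV = 0 \<and> sum (trD x) UNIV = 0
     \<and> (\<forall>j. reflect (z$j) (trA x j, trB x j) = (trC x j, trD x j))}"

definition trace_wave :: "real \<Rightarrow> complex^('n::finite \<times> 4) \<Rightarrow> 'n \<Rightarrow> real \<Rightarrow> complex" where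
  "trace_wave k x j t = trA x j * of_real (cos (k * t)) + trB x j * of_real (sin (k * t))"

lemma has_vector_derivative_cos_sin:
  fixes A B :: complex
  shows "((\<lambda>t. A * of_real (cos (k * t)) + B * of_real (sin (k * t))) has_vector_derivative
     of_real k * (B * of_real (cos (k * t)) - A * of_real (sin (k * t)))) (at t within S)"
  by (auto intro!: derivative_eq_intros simp: algebra_simps)

lemma has_vector_derivative_cos_sin_reversed:
  fixes C D :: complex
  shows "((\<lambda>t. C * of_real (cos (k * (L - t))) + D * of_real (sin (k * (L - t))))
      has_vector_derivative
     of_real k * (C * of_real (sin (k * (L - t))) - D * of_real (cos (k * (L - t)))))
     (at t within S)"
  by (auto intro!: derivative_eq_intros simp: algebra_simps)

lemma edge_traces:
  fixes g g' :: "real \<Rightarrow> complex"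
  assumes L: "0 < L" and k: "0 < k"
    and g: "\<And>t. t \<in> {0..L} \<Longrightarrow> g t = A * of_real (cos (k * t)) + B * of_real (sin (k * t))"
    and g_reversed: "\<And>t. t \<in> {0..L} \<Longrightarrow>
      g t = C * of_real (cos (k * (L - t))) + D * of_real (sin (k * (L - t)))"
    and g': "\<And>t. t \<in> {0..L} \<Longrightarrow> (g has_vector_derivative g' t) (at t within {0..L})"
  shows "g 0 = A" and "g L = C" and "g' 0 = of_real k * B" and "g' L = - (of_real k * D)"
    and "reflect (exp (\<i> * of_real (k * L))) (A, B) = (C, D)"
proof -
  have ends: "0 \<in> {0..L}" "L \<in> {0..L}"
    using L by auto
  have derivative_unique: "a = b" if "t \<in> {0..L}"
    "(g has_vector_derivative a) (at t within {0..L})"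
    "(g has_vector_derivative b) (at t within {0..L})" for a b t
    using vector_derivative_unique_within_closed_interval[of 0 L t g a b] L that by simp
  have dg: "g' t = of_real k * (B * of_real (cos (k * t)) - A * of_real (sin (k * t)))"
    if "t \<in> {0..L}" for t
    using that g by (intro derivative_unique[OF that g'[OF that]]
        has_vector_derivative_transform[OF that _ has_vector_derivative_cos_sin]) auto
  have dg_reversed:
    "g' t = of_real k * (C * of_real (sin (k * (L - t))) - D * of_real (cos (k * (L - t))))"
    if "t \<in> {0..L}" for t
    using that g_reversed by (intro derivative_unique[OF that g'[OF that]]
        has_vector_derivative_transform[OF that _ has_vector_derivative_cos_sin_reversed]) auto
  show "g 0 = A" "g L = C" "g' 0 = of_real k * B" "g' L = - (of_real k * D)"
    using g[OF ends(1)] g_reversed[OF ends(2)] dg[OF ends(1)] dg_reversed[OF ends(2)]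
    by simp_all
  have "A = of_real (cos (k * L)) * C + of_real (sin (k * L)) * D"
    using g[OF ends(1)] g_reversed[OF ends(1)] by (simp add: mult.commute)
  moreover have "B = of_real (sin (k * L)) * C - of_real (cos (k * L)) * D"
    using dg[OF ends(1)] dg_reversed[OF ends(1)] k by (simp add: mult.commute)
  ultimately have "reflect (exp (\<i> * of_real (k * L))) (C, D) = (A, B)"
    by (simp del: of_real_mult)
  then show "reflect (exp (\<i> * of_real (k * L))) (A, B) = (C, D)"
    by (metis reflect_reflect norm_exp_i_times)
qed

lemma is_trace_imp_admissible_traces:
  fixes l :: "real^'n::finite"
  assumes l: "\<forall>j. 0 < l$j" and k: "0 \<le> k" and f: "eig_fun l (k\<^sup>2) f"
    and x: "is_trace l k f x"
  shows "x \<in> admissible_traces (\<chi> j. exp (\<i> * of_real (k * l$j)))"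
proof (cases "k = 0")
  case True
  then obtain c where "\<forall>j. trA x j = c \<and> trB x j = 0 \<and> trC x j = c \<and> trD x j = 0"
    using x unfolding is_trace_def by auto
  with True show ?thesis
    by (simp add: admissible_traces_def reflect_def)
next
  case False
  with k have k: "0 < k" by simp
  obtain f' f'' :: "'n \<Rightarrow> real \<Rightarrow> complex"
    where f': "\<forall>j. \<forall>t\<in>{0..l$j}. (f j has_vector_derivative f' j t) (at t within {0..l$j})"
      and continuous: "\<forall>i j. f i 0 = f j 0" "\<forall>i j. f i (l$i) = f j (l$j)"
      and Kirchhoff: "(\<Sum>j\<in>UNIV. f' j 0) = 0" "(\<Sum>j\<in>UNIV. - f' j (l$j)) = 0"
    using f unfolding eig_fun_def by blast
  have rep: "f j t = trA x j * of_real (cos (k * t)) + trB x j * of_real (sin (k * t))"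
    "f j t = trC x j * of_real (cos (k * (l$j - t))) + trD x j * of_real (sin (k * (l$j - t)))"
    if "t \<in> {0..l$j}" for j t
    using x k that unfolding is_trace_def by blast+
  have edge: "f j 0 = trA x j" "f j (l$j) = trC x j"
    "f' j 0 = of_real k * trB x j" "f' j (l$j) = - (of_real k * trD x j)"
    "reflect (exp (\<i> * of_real (k * l$j))) (trA x j, trB x j) = (trC x j, trD x j)" for j
    by (rule edge_traces[OF l[rule_format, of j] k rep(1)[of _ j] rep(2)[of _ j]
          f'[THEN spec[of _ j], rule_format]]; assumption)+
  have "of_real k * sum (trB x) UNIV = 0" "of_real k * sum (trD x) UNIV = 0"
    using Kirchhoff unfolding sum_distrib_left edge(3,4) by (simp_all add: sum_negf)
  moreover have "trA x i = trA x j" "trC x i = trC x j" for i j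
    using continuous edge(1,2) by metis+
  ultimately show ?thesis
    using k edge(5) unfolding admissible_traces_def by (simp del: of_real_mult)
qed

lemma admissible_traces_imp_eig_fun:
  fixes l :: "real^'n::finite"
  assumes k: "0 < k" and x: "x \<in> admissible_traces (\<chi> j. exp (\<i> * of_real (k * l$j)))"
  shows "eig_fun l (k\<^sup>2) (trace_wave k x)" and "is_trace l k (trace_wave k x) x"
proof -
  have A: "trA x i = trA x j" and C: "trC x i = trC x j" for i j
    using x by (simp_all add: admissible_traces_def)
  have sums: "sum (trB x) UNIV = 0" "sum (trD x) UNIV = 0"
    using x by (simp_all add: admissible_traces_def)
  have CD: "reflect (exp (\<i> * of_real (k * l$j))) (trA x j, trB x j) = (trC x j, trD x j)" for j
    using x by (simp add: admissible_traces_def del: reflect_exp)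
  have reversed: "trace_wave k x j t =
      trC x j * of_real (cos (k * (l$j - t))) + trD x j * of_real (sin (k * (l$j - t)))" for j t
    using reflect_cos_sin[OF CD[of j], of "k * t"] by (simp add: trace_wave_def right_diff_distrib)
  show "is_trace l k (trace_wave k x) x"
    using k reversed by (simp add: is_trace_def trace_wave_def)
  define f' where "f' j t = (of_real k * trB x j) * of_real (cos (k * t))
    + (- of_real k * trA x j) * of_real (sin (k * t))" for j t
  have "(trace_wave k x j has_vector_derivative f' j t) (at t within S)" for j t S
    unfolding trace_wave_def f'_def
    by (rule has_vector_derivative_eq_rhs[OF has_vector_derivative_cos_sin])
      (simp add: algebra_simps)
  moreover have
    "(f' j has_vector_derivative - (of_real (k\<^sup>2) * trace_wave k x j t)) (at t within S)" for j t S
    unfolding trace_wave_def f'_def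
    by (rule has_vector_derivative_eq_rhs[OF has_vector_derivative_cos_sin])
      (simp add: algebra_simps power2_eq_square)
  moreover have "trace_wave k x i 0 = trace_wave k x j 0"
    "trace_wave k x i (l$i) = trace_wave k x j (l$j)" for i j
    using A[of i j] C[of i j] reversed[of i "l$i"] reversed[of j "l$j"]
    by (simp_all add: trace_wave_def)
  moreover have "f' j 0 = of_real k * trB x j" for j
    by (simp add: f'_def)
  moreover have "- f' j (l$j) = of_real k * trD x j" for j
  proof -
    have D: "trD x j = of_real (sin (k * l$j)) * trA x j - of_real (cos (k * l$j)) * trB x j"
      using CD[of j] by (simp del: of_real_mult)
    show ?thesis
      unfolding f'_def D by (simp add: algebra_simps)
  qed
  ultimately show "eig_fun l (k\<^sup>2) (trace_wave k x)"
    unfolding eig_fun_def using sums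
    by (intro exI[of _ f'] exI[of _ "\<lambda>j t. - (of_real (k\<^sup>2) * trace_wave k x j t)"])
      (simp flip: sum_distrib_left)
qed

text \<open>The point \<open>z = 1\<close> may come from \<open>k = 0\<close>; it also comes from \<open>k = 1\<close> on edges of
  length \<open>2 \<pi>\<close>, where \<open>cos t\<close> is an eigenfunction.\<close>

lemma Sigma_setE:
  assumes "z \<in> Sigma_set"
  obtains l :: "real^'n::finite" and k
  where "0 < k" "\<forall>j. 0 < l$j" "is_eigenvalue l (k\<^sup>2)"
    "z = (\<chi> j. exp (\<i> * of_real (k * l$j)))"
proof -
  obtain l :: "real^'n" and k
    where l: "\<forall>j. 0 < l$j" and k: "0 \<le> k" and ev: "is_eigenvalue l (k\<^sup>2)"
      and z: "z = (\<chi> j. exp (\<i> * of_real (k * l$j)))"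
    using assms unfolding Sigma_set_def trace_space_def by force
  show ?thesis
  proof (cases "k = 0")
    case False
    with k l ev z show ?thesis by (intro that) auto
  next
    case True
    define l' :: "real^'n" where "l' = (\<chi> j. pi * 2)"
    have z': "z = (\<chi> j. exp (\<i> * of_real (1 * l'$j)))"
      using z True by (simp add: l'_def vec_eq_iff)
    define y :: "complex^('n \<times> 4)" where "y = trace_vec (\<lambda>_. 1) (\<lambda>_. 0) (\<lambda>_. 1) (\<lambda>_. 0)"
    have "y \<in> admissible_traces (\<chi> j. exp (\<i> * of_real (1 * l'$j)))"
      by (simp add: y_def l'_def admissible_traces_def reflect_def)
    from admissible_traces_imp_eig_fun(1)[OF zero_less_one this] have "is_eigenvalue l' (1\<^sup>2)"
      unfolding is_eigenvalue_def
      by (intro exI conjI, assumption) (auto simp: y_def l'_def trace_wave_def intro!: bexI[of _ 0])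
    then show ?thesis
      using z' by (intro that[of 1 l']) (simp_all add: l'_def)
  qed
qed

lemma Sigma_set_norm:
  assumes "z \<in> Sigma_set"
  shows "cmod (z$j) = 1"
  using assms by (elim Sigma_setE) (simp del: of_real_mult)

lemma trace_fiber_eq_admissible_traces:
  assumes "z \<in> Sigma_set"
  shows "trace_fiber z = admissible_traces z"
proof
  show "trace_fiber z \<subseteq> admissible_traces z"
    by (auto simp: trace_fiber_def trace_space_def simp del: of_real_mult
        intro: is_trace_imp_admissible_traces)
  obtain l k where k: "0 < k" and l: "\<forall>j. 0 < l$j" and ev: "is_eigenvalue l (k\<^sup>2)"
    and z: "z = (\<chi> j. exp (\<i> * of_real (k * l$j)))"
    using assms by (rule Sigma_setE)
  show "admissible_traces z \<subseteq> trace_fiber z"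
  proof
    fix x assume "x \<in> admissible_traces z"
    with admissible_traces_imp_eig_fun[OF k] z
    have "eig_fun l (k\<^sup>2) (trace_wave k x)" "is_trace l k (trace_wave k x) x"
      by simp_all
    with k l ev z show "x \<in> trace_fiber z"
      unfolding trace_fiber_def trace_space_def by (auto intro!: exI[of _ l] exI[of _ k])
  qed
qed

section \<open>Eigenspaces of a linear involution\<close>

context vector_space
begin

lemma subspace_eigenspace_on:
  assumes "subspace V" and "Vector_Spaces.linear scale scale f"
  shows "subspace {x \<in> V. f x = scale c x}"
proof -
  interpret f: Vector_Spaces.linear scale scale f by fact
  show ?thesis
    using assms(1) by (auto simp: subspace_def f.add f.scale scale_right_distrib scale_left_commute)
qed

lemma involution_eigenspaces_inter:
  assumes "subspace V" and "Vector_Spaces.linear scale scale f" and "(2::'a) \<noteq> 0"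
  shows "{x \<in> V. f x = x} \<inter> {x \<in> V. f x = - x} = {0}"
proof -
  interpret f: Vector_Spaces.linear scale scale f by fact
  have "x = 0" if "f x = x" "f x = - x" for x
  proof -
    have "scale 2 x = x + - x"
      using that by (metis one_add_one scale_left_distrib scale_one)
    then show ?thesis using assms(3) by simp
  qed
  moreover have "0 \<in> V"
    using assms(1) by (rule subspace_0)
  ultimately show ?thesis by auto
qed

lemma involution_eigenspaces_sum:
  assumes "subspace V" and "Vector_Spaces.linear scale scale f" and "\<And>x. f (f x) = x"
    and "\<And>x. x \<in> V \<Longrightarrow> f x \<in> V" and "(2::'a) \<noteq> 0"
  shows "V = {p + q | p q. p \<in> {x \<in> V. f x = x} \<and> q \<in> {x \<in> V. f x = - x}}"
proof -
  interpret f: Vector_Spaces.linear scale scale f by fact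
  have "x \<in> {p + q | p q. p \<in> {x \<in> V. f x = x} \<and> q \<in> {x \<in> V. f x = - x}}" if x: "x \<in> V" for x
  proof -
    define p where "p = scale (inverse 2) (x + f x)"
    define q where "q = scale (inverse 2) (x - f x)"
    have "scale 2 x = x + x"
      by (metis one_add_one scale_left_distrib scale_one)
    then have "p + q = scale (inverse 2) (scale 2 x)"
      by (simp add: p_def q_def flip: scale_right_distrib)
    then have "x = p + q"
      using assms(5) by simp
    moreover have "p \<in> V" "q \<in> V"
      using x assms(1,4) by (simp_all add: p_def q_def subspace_scale subspace_add subspace_diff)
    moreover have "f p = p" "f q = - q"
      by (simp_all add: p_def q_def f.scale f.add f.diff assms(3) flip: scale_minus_right)
    ultimately show ?thesis by blast
  qed
  moreover have "p + q \<in> V" if "p \<in> V" "q \<in> V" for p q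
    using assms(1) that by (rule subspace_add)
  ultimately show ?thesis by blast
qed

end

definition reverse_edges :: "complex^('n::finite \<times> 4) \<Rightarrow> complex^('n \<times> 4)" where
  "reverse_edges x = trace_vec (trC x) (trD x) (trA x) (trB x)"

lemma reverse_edges_reverse_edges [simp]: "reverse_edges (reverse_edges x) = x"
  by (simp add: reverse_edges_def trace_eq_iff)

lemma linear_reverse_edges: "Vector_Spaces.linear (*s) (*s) reverse_edges"
  by (simp add: Vector_Spaces.linear_iff vec.vector_space_axioms reverse_edges_def trace_eq_iff
      fun_eq_iff)

lemma reverse_edges_eq_iff:
  "reverse_edges x = x \<longleftrightarrow> (\<forall>j. trA x j = trC x j \<and> trB x j = trD x j)"
  "reverse_edges x = - x \<longleftrightarrow> (\<forall>j. trA x j = - trC x j \<and> trB x j = - trD x j)"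
  by (auto simp: reverse_edges_def trace_eq_iff fun_eq_iff)

lemma subspace_admissible_traces: "vec.subspace (admissible_traces z)"
proof -
  have reflect_linear:
    "reflect w (A + A', B + B') =
      (fst (reflect w (A, B)) + fst (reflect w (A', B')),
       snd (reflect w (A, B)) + snd (reflect w (A', B')))"
    "reflect w (c * A, c * B) = (c * fst (reflect w (A, B)), c * snd (reflect w (A, B)))"
    for w A B A' B' c
    by (simp_all add: reflect_def algebra_simps)
  show ?thesis
    unfolding vec.subspace_def
  proof (intro conjI ballI allI)
    show "0 \<in> admissible_traces z"
      by (simp add: admissible_traces_def reflect_def)
    show "x + y \<in> admissible_traces z"
      if "x \<in> admissible_traces z" "y \<in> admissible_traces z" for x y
      using that unfolding admissible_traces_def by (simp add: sum.distrib reflect_linear) metis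
    show "c *s x \<in> admissible_traces z" if "x \<in> admissible_traces z" for c x
      using that unfolding admissible_traces_def
      by (simp add: reflect_linear flip: sum_distrib_left)
  qed
qed

lemma reverse_edges_admissible_traces:
  assumes "\<forall>j. cmod (z$j) = 1" and x: "x \<in> admissible_traces z"
  shows "reverse_edges x \<in> admissible_traces z"
proof -
  have "reflect (z$j) (trA x j, trB x j) = (trC x j, trD x j)" for j
    using x unfolding admissible_traces_def by blast
  then have "reflect (z$j) (trC x j, trD x j) = (trA x j, trB x j)" for j
    using assms(1) reflect_reflect by metis
  with x show ?thesis
    by (simp add: admissible_traces_def reverse_edges_def)
qed

section \<open>Solvability of the edge equations\<close>

lemma sum_prod_except_zero:
  fixes u w :: "'n::finite \<Rightarrow> 'a::comm_ring_1"
  assumes "w j0 = 0"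
  shows "(\<Sum>j\<in>UNIV. u j * (\<Prod>i\<in>UNIV - {j}. w i)) = u j0 * (\<Prod>i\<in>UNIV - {j0}. w i)"
proof -
  have "(\<Prod>i\<in>UNIV - {j}. w i) = 0" if "j \<noteq> j0" for j
    using assms that by (intro prod_zero) auto
  then show ?thesis
    by (subst sum.remove[of UNIV j0]) (auto intro!: sum.neutral)
qed

lemma sum_prod_except_nonzero:
  fixes u w :: "'n::finite \<Rightarrow> 'a::field"
  assumes "\<And>j. w j \<noteq> 0"
  shows "(\<Sum>j\<in>UNIV. u j * (\<Prod>i\<in>UNIV - {j}. w i)) =
    (\<Prod>i\<in>UNIV. w i) * (\<Sum>j\<in>UNIV. u j / w j)"
proof -
  have "(\<Prod>i\<in>UNIV - {j}. w i) = (\<Prod>i\<in>UNIV. w i) / w j" for j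
    using prod.remove[of UNIV j w] assms[of j] by (simp add: field_simps)
  then show ?thesis by (simp add: sum_distrib_left algebra_simps)
qed

lemma solution_imp_sum_prod_except_eq_0:
  fixes u w b :: "'n::finite \<Rightarrow> 'a::field"
  assumes nontrivial: "a \<noteq> 0 \<or> (\<exists>j. b j \<noteq> 0)" and eq: "\<And>j. u j * a = w j * b j"
    and sum: "sum b UNIV = 0"
  shows "(\<Sum>j\<in>UNIV. u j * (\<Prod>i\<in>UNIV - {j}. w i)) = 0" (is "?P = 0")
proof (cases "a = 0")
  case False
  have "a * ?P = (\<Sum>j\<in>UNIV. b j * (w j * (\<Prod>i\<in>UNIV - {j}. w i)))"
    unfolding sum_distrib_left
    by (intro sum.cong) (simp_all add: mult.left_commute mult.commute[of a] eq)
  also have "\<dots> = (\<Prod>i\<in>UNIV. w i) * sum b UNIV"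
    by (simp add: sum_distrib_right mult.commute flip: prod.remove)
  finally show ?thesis using False sum by simp
next
  case True
  then obtain j0 where j0: "b j0 \<noteq> 0" using nontrivial by blast
  have "sum b UNIV = b j0 + sum b (UNIV - {j0})"
    by (simp add: sum.remove[of UNIV j0])
  with sum j0 have "sum b (UNIV - {j0}) \<noteq> 0"
    by auto
  moreover have "sum b (UNIV - {j0}) = 0" if "\<And>j. j \<noteq> j0 \<Longrightarrow> b j = 0"
    using that by (intro sum.neutral) auto
  ultimately obtain j1 where j1: "j1 \<noteq> j0" "b j1 \<noteq> 0"
    by blast
  have "w j0 = 0" "w j1 = 0" using eq[of j0] eq[of j1] True j0 j1 by auto
  then show ?thesis using j1 by (auto simp: sum_prod_except_zero[of w j0])
qed

lemma sum_prod_except_eq_0_imp_solution: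
  fixes u w :: "'n::finite \<Rightarrow> 'a::field"
  assumes nondegenerate: "\<And>j. u j \<noteq> 0 \<or> w j \<noteq> 0"
    and P: "(\<Sum>j\<in>UNIV. u j * (\<Prod>i\<in>UNIV - {j}. w i)) = 0"
  shows "\<exists>a b. (a \<noteq> 0 \<or> (\<exists>j. b j \<noteq> 0)) \<and> (\<forall>j. u j * a = w j * b j) \<and> sum b UNIV = 0"
proof (cases "\<exists>j0. w j0 = 0")
  case True
  then obtain j0 where j0: "w j0 = 0" by blast
  then have "u j0 * (\<Prod>i\<in>UNIV - {j0}. w i) = 0"
    using P by (simp add: sum_prod_except_zero)
  then obtain j1 where j1: "j1 \<noteq> j0" "w j1 = 0"
    using nondegenerate[of j0] j0 by auto
  define b :: "'n \<Rightarrow> 'a" where "b j = (if j = j0 then 1 else 0) - (if j = j1 then 1 else 0)" for j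
  have "sum b UNIV = 0"
    by (simp add: b_def sum_subtractf)
  then show ?thesis
    using j0 j1 by (intro exI[of _ 0] exI[of _ b]) (auto simp: b_def)
next
  case False
  then have w: "\<And>j. w j \<noteq> 0" by blast
  define b where "b j = u j / w j" for j
  have "sum b UNIV = 0"
    using P w by (simp add: b_def sum_prod_except_nonzero)
  then show ?thesis
    using w by (intro exI[of _ 1] exI[of _ b]) (auto simp: b_def)
qed

lemma nontrivial_solution_iff_sum_prod_except_eq_0:
  fixes u w :: "'n::finite \<Rightarrow> 'a::field"
  assumes "\<And>j. u j \<noteq> 0 \<or> w j \<noteq> 0"
  shows "(\<exists>a b. (a \<noteq> 0 \<or> (\<exists>j. b j \<noteq> 0)) \<and> (\<forall>j. u j * a = w j * b j) \<and> sum b UNIV = 0)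
    \<longleftrightarrow> (\<Sum>j\<in>UNIV. u j * (\<Prod>i\<in>UNIV - {j}. w i)) = 0"
proof
  assume "\<exists>a b. (a \<noteq> 0 \<or> (\<exists>j. b j \<noteq> 0)) \<and> (\<forall>j. u j * a = w j * b j) \<and> sum b UNIV = 0"
  then obtain a b where "a \<noteq> 0 \<or> (\<exists>j. b j \<noteq> 0)" "\<forall>j. u j * a = w j * b j" "sum b UNIV = 0"
    by blast
  then show "(\<Sum>j\<in>UNIV. u j * (\<Prod>i\<in>UNIV - {j}. w i)) = 0"
    by (intro solution_imp_sum_prod_except_eq_0[of a b]) auto
qed (rule sum_prod_except_eq_0_imp_solution[OF assms])

lemma parity_trace_imp_solvable:
  assumes z: "\<forall>j. cmod (z$j) = 1" and \<epsilon>: "\<epsilon>\<^sup>2 = 1"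
    and x: "x \<in> admissible_traces z" and parity: "reverse_edges x = \<epsilon> *s x" and "x \<noteq> 0"
  shows "\<exists>a b. (a \<noteq> 0 \<or> (\<exists>j. b j \<noteq> 0)) \<and> (\<forall>j. (z$j - \<epsilon>) * a = (z$j + \<epsilon>) * b j)
    \<and> sum b UNIV = 0"
proof -
  have CD: "trC x j = \<epsilon> * trA x j" "trD x j = \<epsilon> * trB x j" for j
    using arg_cong[OF parity, of "\<lambda>y. trA y j"] arg_cong[OF parity, of "\<lambda>y. trB y j"]
    by (simp_all add: reverse_edges_def)
  obtain a where a: "\<And>j. trA x j = a"
    using x unfolding admissible_traces_def by blast
  txt \<open>The factor \<open>\<i>\<close> of \<open>reflect_eq_scale_iff\<close> is absorbed into \<open>b = \<i> B\<close>.\<close>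
  show ?thesis
  proof (intro exI conjI allI)
    show "a \<noteq> 0 \<or> (\<exists>j. \<i> * trB x j \<noteq> 0)"
      using \<open>x \<noteq> 0\<close> by (auto simp: trace_eq_iff fun_eq_iff a CD)
    show "(z$j - \<epsilon>) * a = (z$j + \<epsilon>) * (\<i> * trB x j)" for j
      using x z reflect_eq_scale_iff[OF _ \<epsilon>, of "z$j" a "trB x j"]
      by (simp add: admissible_traces_def a CD mult.left_commute)
    show "(\<Sum>j\<in>UNIV. \<i> * trB x j) = 0"
      using x by (simp add: admissible_traces_def flip: sum_distrib_left)
  qed
qed

lemma solvable_imp_parity_trace:
  assumes z: "\<forall>j. cmod (z$j) = 1" and \<epsilon>: "\<epsilon>\<^sup>2 = 1"
    and nontrivial: "a \<noteq> 0 \<or> (\<exists>j. b j \<noteq> 0)"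
    and eq: "\<And>j. (z$j - \<epsilon>) * a = (z$j + \<epsilon>) * b j" and sum: "sum b UNIV = 0"
  defines "x \<equiv> trace_vec (\<lambda>_. a) (\<lambda>j. - \<i> * b j) (\<lambda>_. \<epsilon> * a) (\<lambda>j. \<epsilon> * (- \<i> * b j))"
  shows "x \<in> admissible_traces z" and "reverse_edges x = \<epsilon> *s x" and "x \<noteq> 0"
proof -
  have "reflect (z$j) (a, - \<i> * b j) = (\<epsilon> * a, \<epsilon> * (- \<i> * b j))" for j
  proof -
    have "(z$j - \<epsilon>) * a = \<i> * (z$j + \<epsilon>) * (- \<i> * b j)"
      using eq[of j] by (simp add: algebra_simps)
    then show ?thesis
      by (simp only: reflect_eq_scale_iff[OF z[rule_format] \<epsilon>])
  qed
  then show "x \<in> admissible_traces z"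
    using sum by (simp add: x_def admissible_traces_def sum_negf flip: sum_distrib_left)
  show "reverse_edges x = \<epsilon> *s x"
    using \<epsilon> by (simp add: x_def reverse_edges_def trace_eq_iff fun_eq_iff power2_eq_square)
  show "x \<noteq> 0"
    using nontrivial by (auto simp: x_def trace_vec_eq_0_iff)
qed

lemma parity_traces_nontrivial_iff:
  assumes z: "\<forall>j. cmod (z$j) = 1" and \<epsilon>: "\<epsilon>\<^sup>2 = 1"
  shows "{x \<in> admissible_traces z. reverse_edges x = \<epsilon> *s x} \<noteq> {0} \<longleftrightarrow>
    (\<Sum>j\<in>UNIV. (z$j - \<epsilon>) * (\<Prod>i\<in>UNIV - {j}. z$i + \<epsilon>)) = 0"
proof -
  have "0 \<in> admissible_traces z" "reverse_edges 0 = \<epsilon> *s 0"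
    by (simp_all add: vec.subspace_0[OF subspace_admissible_traces]
        vec.linear_0[OF linear_reverse_edges])
  then have "{x \<in> admissible_traces z. reverse_edges x = \<epsilon> *s x} \<noteq> {0} \<longleftrightarrow>
      (\<exists>x. x \<in> admissible_traces z \<and> reverse_edges x = \<epsilon> *s x \<and> x \<noteq> 0)"
    by blast
  also have "\<dots> \<longleftrightarrow> (\<exists>a b. (a \<noteq> 0 \<or> (\<exists>j. b j \<noteq> 0))
      \<and> (\<forall>j. (z$j - \<epsilon>) * a = (z$j + \<epsilon>) * b j) \<and> sum b UNIV = 0)"
  proof
    assume "\<exists>x. x \<in> admissible_traces z \<and> reverse_edges x = \<epsilon> *s x \<and> x \<noteq> 0"
    then show "\<exists>a b. (a \<noteq> 0 \<or> (\<exists>j. b j \<noteq> 0))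
      \<and> (\<forall>j. (z$j - \<epsilon>) * a = (z$j + \<epsilon>) * b j) \<and> sum b UNIV = 0"
      using parity_trace_imp_solvable[OF z \<epsilon>] by blast
  next
    assume "\<exists>a b. (a \<noteq> 0 \<or> (\<exists>j. b j \<noteq> 0))
      \<and> (\<forall>j. (z$j - \<epsilon>) * a = (z$j + \<epsilon>) * b j) \<and> sum b UNIV = 0"
    then obtain a b where "a \<noteq> 0 \<or> (\<exists>j. b j \<noteq> 0)" "\<And>j. (z$j - \<epsilon>) * a = (z$j + \<epsilon>) * b j"
      "sum b UNIV = 0"
      by blast
    from solvable_imp_parity_trace[OF z \<epsilon> this]
    show "\<exists>x. x \<in> admissible_traces z \<and> reverse_edges x = \<epsilon> *s x \<and> x \<noteq> 0"
      by blast
  qed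
  also have "\<dots> \<longleftrightarrow> (\<Sum>j\<in>UNIV. (z$j - \<epsilon>) * (\<Prod>i\<in>UNIV - {j}. z$i + \<epsilon>)) = 0"
  proof (rule nontrivial_solution_iff_sum_prod_except_eq_0)
    have "(z$j + \<epsilon>) - (z$j - \<epsilon>) = 2 * \<epsilon>" and "\<epsilon> \<noteq> 0" for j
      using \<epsilon> by auto
    then show "z$j - \<epsilon> \<noteq> 0 \<or> z$j + \<epsilon> \<noteq> 0" for j
      by (metis diff_zero mult_eq_0_iff zero_neq_numeral)
  qed
  finally show ?thesis .
qed

theorem mainTheorem12:
  fixes z :: "complex^'n::finite"
  assumes "z \<in> Sigma_set"
  shows "vec.subspace (trace_fiber_s z) \<and> vec.subspace (trace_fiber_as z)
    \<and> trace_fiber_s z \<inter> trace_fiber_as z = {0}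
    \<and> trace_fiber z = {s + a | s a. s \<in> trace_fiber_s z \<and> a \<in> trace_fiber_as z}
    \<and> (trace_fiber_s z \<noteq> {0} \<longleftrightarrow> P_s z = 0)
    \<and> (trace_fiber_as z \<noteq> {0} \<longleftrightarrow> P_as z = 0)"
proof -
  have unimodular: "\<forall>j. cmod (z$j) = 1"
    using Sigma_set_norm[OF assms] by blast
  have fiber: "trace_fiber z = admissible_traces z"
    by (rule trace_fiber_eq_admissible_traces[OF assms])
  have s: "trace_fiber_s z = {x \<in> admissible_traces z. reverse_edges x = x}"
    and as: "trace_fiber_as z = {x \<in> admissible_traces z. reverse_edges x = - x}"
    by (simp_all add: trace_fiber_s_def trace_fiber_as_def fiber reverse_edges_eq_iff)
  note V = subspace_admissible_traces[of z] and f = linear_reverse_edges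
  have two: "(2::complex) \<noteq> 0"
    by simp
  have "vec.subspace (trace_fiber_s z)" "vec.subspace (trace_fiber_as z)"
    using vec.subspace_eigenspace_on[OF V f, of 1] vec.subspace_eigenspace_on[OF V f, of "-1"]
    unfolding s as by simp_all
  moreover have "trace_fiber_s z \<inter> trace_fiber_as z = {0}"
    unfolding s as by (rule vec.involution_eigenspaces_inter[OF V f two])
  moreover have "trace_fiber z = {s + a | s a. s \<in> trace_fiber_s z \<and> a \<in> trace_fiber_as z}"
    unfolding s as fiber
    by (rule vec.involution_eigenspaces_sum[OF V f reverse_edges_reverse_edges
          reverse_edges_admissible_traces[OF unimodular] two])
  moreover have "trace_fiber_s z \<noteq> {0} \<longleftrightarrow> P_s z = 0"
    using parity_traces_nontrivial_iff[OF unimodular, of 1] unfolding s P_s_def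
    by (simp only: vector_smult_lid power_one)
  moreover have "trace_fiber_as z \<noteq> {0} \<longleftrightarrow> P_as z = 0"
    using parity_traces_nontrivial_iff[OF unimodular, of "-1"] unfolding as P_as_def
    by (simp only: vector_sneg_minus1 power2_minus power_one diff_minus_eq_add
        add_uminus_conv_diff)
  ultimately show ?thesis
    by blast
qed

end
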